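(* Let $f(x)=\frac1n\sum_{i=1}^n f_i(x)$ on $\mathbb{R}^d$ with each $f_i$ convex and $L$-smooth, with a nonempty minimizer set, and let $x_0\in\mathbb{R}^d$. Fix $\delta_t>0$, $p=\frac1n$, and let $\alpha,\tau_x,\tau_z,C_{\rm IDC},C_{\rm IFC}$ be: $\alpha$ the unique positive root of $\big(1-\frac{p(\alpha+\delta_t)}{\alpha+L+\delta_t}\big)\big(1+\frac{\delta_t}{\alpha}\big)^2=1$, $\tau_x=\frac{\alpha+\delta_t}{\alpha+L+\delta_t}$, $\tau_z=\frac{\tau_x}{\delta_t}-\frac{\alpha(1-\tau_x)}{\delta_tL}$, $C_{\rm IDC}=L^2+\frac{L\alpha^2p}{L+(1-p)(\alpha+\delta_t)}$, $C_{\rm IFC}=2L+\frac{2L\alpha^2p}{(L+(1-p)(\alpha+\delta_t))\delta_t}$. Define $f_i^{\delta_t}(x)=f_i(x)+\frac{\delta_t}2\|x-x_0\|^2$ and $f^{\delta_t}=\frac1n\sum_if_i^{\delta_t}$. Set $z_0=\tilde x_0=x_0$ and for $k=0,1,\dots$: $y_k=\tau_xz_k+(1-\tau_x)\tilde x_k+\tau_z\big(\delta_t(\tilde x_k-z_k)-\nabla f^{\delta_t}(\tilde x_k)\big)$; $z_{k+1}=\arg\min_x\{\langle\mathcal G_k^{\delta_t},x\rangle+\frac\alpha2\|x-z_k\|^2+\frac{\delta_t}2\|x-y_k\|^2\}$ with $\mathcal G^{\delta_t}_k=\nabla f^{\delta_t}_{i_k}(y_k)-\nabla f^{\delta_t}_{i_k}(\tilde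 x_k)+\nabla f^{\delta_t}(\tilde x_k)$, $i_k$ uniform on $\{1,\dots,n\}$; $\tilde x_{k+1}=y_k$ with probability $p$, else $\tilde x_{k+1}=\tilde x_k$. Then for every $k\ge0$: (i) if $\|x_0-x^\star\|\le R_0$ for some minimizer $x^\star$ of $f$, then $\mathbb E\|\nabla f(\tilde x_k)\|\le\big(\delta_t+(1+\frac{\delta_t}{\alpha})^{-k}\sqrt{C_{\rm IDC}}\big)R_0$; (ii) if $f(x_0)-\min f\le\Delta_0$, then $\mathbb E\|\nabla f(\tilde x_k)\|\le\big(\sqrt{2\delta_t}+(1+\frac{\delta_t}{\alpha})^{-k}\sqrt{C_{\rm IFC}}\big)\sqrt{\Delta_0}$.
   Context: $L$-smooth means $L$-Lipschitz gradient; norms are Euclidean; $\mathbb E$ is total expectation over the sampling. The iteration is the inner loop (for a fixed regularization parameter $\delta_t$) of the paper's R-Acc-SVRG-G method. *)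

theory Defs
  imports "HOL-Probability.Probability"
begin

definition avgF :: "nat \<Rightarrow> (nat \<Rightarrow> 'a \<Rightarrow> real) \<Rightarrow> 'a \<Rightarrow> real" where
  "avgF n f x = (1 / real n) * (\<Sum>i<n. f i x)"

definition avgG :: "nat \<Rightarrow> (nat \<Rightarrow> 'a \<Rightarrow> 'a::real_vector) \<Rightarrow> 'a \<Rightarrow> 'a" where
  "avgG n g x = (1 / real n) *\<^sub>R (\<Sum>i<n. g i x)"

text \<open>Gradient of the regularized component f_i^delta(x) = f_i(x) + delta/2 ||x - x0||^2.\<close>
definition gradReg :: "(nat \<Rightarrow> 'a \<Rightarrow> 'a::real_vector) \<Rightarrow> real \<Rightarrow> 'a \<Rightarrow> nat \<Rightarrow> 'a \<Rightarrow> 'a" where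
  "gradReg g \<delta> x0 i x = g i x + \<delta> *\<^sub>R (x - x0)"

definition gradRegF :: "nat \<Rightarrow> (nat \<Rightarrow> 'a \<Rightarrow> 'a::real_vector) \<Rightarrow> real \<Rightarrow> 'a \<Rightarrow> 'a \<Rightarrow> 'a" where
  "gradRegF n g \<delta> x0 x = avgG n (gradReg g \<delta> x0) x"

definition tau_x :: "real \<Rightarrow> real \<Rightarrow> real \<Rightarrow> real" where
  "tau_x L \<delta> \<alpha> = (\<alpha> + \<delta>) / (\<alpha> + L + \<delta>)"

definition tau_z :: "real \<Rightarrow> real \<Rightarrow> real \<Rightarrow> real" where
  "tau_z L \<delta> \<alpha> = tau_x L \<delta> \<alpha> / \<delta> - \<alpha> * (1 - tau_x L \<delta> \<alpha>) / (\<delta> * L)"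

definition C_IDC :: "real \<Rightarrow> real \<Rightarrow> real \<Rightarrow> real \<Rightarrow> real" where
  "C_IDC p L \<delta> \<alpha> = L\<^sup>2 + L * \<alpha>\<^sup>2 * p / (L + (1 - p) * (\<alpha> + \<delta>))"

definition C_IFC :: "real \<Rightarrow> real \<Rightarrow> real \<Rightarrow> real \<Rightarrow> real" where
  "C_IFC p L \<delta> \<alpha> = 2 * L + 2 * L * \<alpha>\<^sup>2 * p / ((L + (1 - p) * (\<alpha> + \<delta>)) * \<delta>)"

definition y_pt :: "nat \<Rightarrow> (nat \<Rightarrow> 'a \<Rightarrow> 'a::real_vector) \<Rightarrow> real \<Rightarrow> real \<Rightarrow> real \<Rightarrow> 'a \<Rightarrow> 'a \<Rightarrow> 'a \<Rightarrow> 'a" where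
  "y_pt n g L \<delta> \<alpha> x0 z xt =
     tau_x L \<delta> \<alpha> *\<^sub>R z + (1 - tau_x L \<delta> \<alpha>) *\<^sub>R xt
     + tau_z L \<delta> \<alpha> *\<^sub>R (\<delta> *\<^sub>R (xt - z) - gradRegF n g \<delta> x0 xt)"

definition G_vr :: "nat \<Rightarrow> (nat \<Rightarrow> 'a \<Rightarrow> 'a::real_vector) \<Rightarrow> real \<Rightarrow> 'a \<Rightarrow> nat \<Rightarrow> 'a \<Rightarrow> 'a \<Rightarrow> 'a" where
  "G_vr n g \<delta> x0 i y xt = gradReg g \<delta> x0 i y - gradReg g \<delta> x0 i xt + gradRegF n g \<delta> x0 xt"

definition z_next :: "real \<Rightarrow> real \<Rightarrow> 'a::real_inner \<Rightarrow> 'a \<Rightarrow> 'a \<Rightarrow> 'a" where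
  "z_next \<alpha> \<delta> G z y =
     (ARG_MIN (\<lambda>x. G \<bullet> x + \<alpha> / 2 * (norm (x - z))\<^sup>2 + \<delta> / 2 * (norm (x - y))\<^sup>2) x. True)"

definition svrg_step :: "nat \<Rightarrow> (nat \<Rightarrow> 'a \<Rightarrow> 'a::real_inner) \<Rightarrow> real \<Rightarrow> real \<Rightarrow> real \<Rightarrow> 'a
     \<Rightarrow> 'a \<times> 'a \<Rightarrow> ('a \<times> 'a) pmf" where
  "svrg_step n g L \<delta> \<alpha> x0 s =
     (case s of (z, xt) \<Rightarrow>
       (let y = y_pt n g L \<delta> \<alpha> x0 z xt in
        do { i \<leftarrow> pmf_of_set {..<n};
             b \<leftarrow> bernoulli_pmf (1 / real n);
             return_pmf (z_next \<alpha> \<delta> (G_vr n g \<delta> x0 i y xt) z y, if b then y else xt) }))"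

fun svrg_state :: "nat \<Rightarrow> (nat \<Rightarrow> 'a \<Rightarrow> 'a::real_inner) \<Rightarrow> real \<Rightarrow> real \<Rightarrow> real \<Rightarrow> 'a
     \<Rightarrow> nat \<Rightarrow> ('a \<times> 'a) pmf" where
  "svrg_state n g L \<delta> \<alpha> x0 0 = return_pmf (x0, x0)"
| "svrg_state n g L \<delta> \<alpha> x0 (Suc k) = svrg_state n g L \<delta> \<alpha> x0 k \<bind> svrg_step n g L \<delta> \<alpha> x0"

end

theory Submission
  imports Defs
begin

(* Let xs be the minimizer of the regularized objective f(x) + delta/2 ||x - x0||^2, so that
   grad f(xs) = delta (x0 - xs). With D the Bregman divergence of f at xs and S = alpha + L + delta,
   the Lyapunov function
     Phi(z, xt) = D(xt) + c ||z - xs||^2,   c = p (alpha + delta)^2 / (2 S),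
   contracts in expectation by rate^2 = (alpha / (alpha + delta))^2 in every step: averaging over
   the sampled index turns ||z_{k+1} - xs||^2 into a bias-variance expansion, and the three facts
   D(y) <= <grad f(y) - grad f(xs), y - xs>, the componentwise cocoercivity bound on the variance,
   and the linear identity defining y close the estimate exactly because alpha solves its defining
   equation. Cocoercivity of f gives ||grad f(xt) - grad f(xs)||^2 <= 2 L Phi, so by Jensen's
   inequality E ||grad f(xt_k)|| <= delta ||x0 - xs|| + rate^k sqrt (2 L Phi_0). Finally xs is closer
   to x0 than any minimizer of f, and delta/2 ||x0 - xs||^2 <= f(x0) - min f; these bound both terms
   by R0, respectively by Delta0. *)

lemma has_real_derivative_along_line:
  fixes F :: "'a::real_inner \<Rightarrow> real"
  assumes "\<And>x. GDERIV F x :> G x"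
  shows "((\<lambda>t. F (x + t *\<^sub>R v)) has_real_derivative (G (x + t *\<^sub>R v) \<bullet> v)) (at t)"
proof -
  have line: "((\<lambda>t. x + t *\<^sub>R v) has_derivative (\<lambda>h. h *\<^sub>R v)) (at t)"
    by (auto intro!: derivative_eq_intros)
  have "(F has_derivative (\<lambda>h. h \<bullet> G (x + t *\<^sub>R v))) (at (x + t *\<^sub>R v))"
    using assms unfolding gderiv_def by blast
  from has_derivative_compose[OF line this]
  have "((\<lambda>t. F (x + t *\<^sub>R v)) has_derivative (\<lambda>h. h * (G (x + t *\<^sub>R v) \<bullet> v))) (at t)"
    by (simp add: o_def inner_commute)
  then show ?thesis
    by (simp add: has_field_derivative_def mult_commute_abs)
qed

lemma lipschitz_gradient_upper_bound:
  fixes F :: "'a::real_inner \<Rightarrow> real"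
  assumes grad: "\<And>x. GDERIV F x :> G x"
    and lip: "\<And>x y. norm (G x - G y) \<le> L * norm (x - y)"
  shows "F y \<le> F x + G x \<bullet> (y - x) + L / 2 * (norm (y - x))\<^sup>2"
proof -
  define v where "v = y - x"
  define \<psi> where "\<psi> t = F (x + t *\<^sub>R v) - t * (G x \<bullet> v) - L / 2 * t\<^sup>2 * (norm v)\<^sup>2" for t
  have "\<psi> 1 \<le> \<psi> 0"
  proof (rule DERIV_nonpos_imp_nonincreasing[of 0 1])
    fix t :: real
    assume t: "0 \<le> t" "t \<le> 1"
    have "(\<psi> has_real_derivative (G (x + t *\<^sub>R v) \<bullet> v - G x \<bullet> v - L * t * (norm v)\<^sup>2)) (at t)"
      unfolding \<psi>_def
      by (rule derivative_eq_intros has_real_derivative_along_line[OF grad] refl | simp)+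
    moreover have "G (x + t *\<^sub>R v) \<bullet> v - G x \<bullet> v \<le> L * t * (norm v)\<^sup>2"
    proof -
      have "G (x + t *\<^sub>R v) \<bullet> v - G x \<bullet> v \<le> norm (G (x + t *\<^sub>R v) - G x) * norm v"
        by (metis inner_diff_left norm_cauchy_schwarz)
      also have "\<dots> \<le> L * norm (t *\<^sub>R v) * norm v"
        using lip[of "x + t *\<^sub>R v" x] by (intro mult_right_mono) auto
      finally show ?thesis
        using t by (simp add: power2_eq_square mult.assoc)
    qed
    ultimately show "\<exists>d. (\<psi> has_real_derivative d) (at t) \<and> d \<le> 0"
      by force
  qed simp
  then show ?thesis
    by (simp add: \<psi>_def v_def algebra_simps)
qed

lemma convex_gradient_lower_bound:
  fixes F :: "'a::real_inner \<Rightarrow> real"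
  assumes convex: "convex_on UNIV F" and grad: "\<And>x. GDERIV F x :> G x"
  shows "F x + G x \<bullet> (y - x) \<le> F y"
proof -
  define \<psi> where "\<psi> t = F (x + t *\<^sub>R (y - x))" for t
  have "convex_on UNIV \<psi>"
  proof (rule convex_onI)
    fix t s r :: real
    assume "0 < t" "t < 1"
    moreover have "x + ((1 - t) * s + t * r) *\<^sub>R (y - x)
        = (1 - t) *\<^sub>R (x + s *\<^sub>R (y - x)) + t *\<^sub>R (x + r *\<^sub>R (y - x))"
      by (simp add: algebra_simps)
    ultimately show "\<psi> ((1 - t) *\<^sub>R s + t *\<^sub>R r) \<le> (1 - t) * \<psi> s + t * \<psi> r"
      unfolding \<psi>_def using convex_onD[OF convex, of t] by simp
  qed simp
  moreover have "(\<psi> has_real_derivative (G x \<bullet> (y - x))) (at 0)"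
    using has_real_derivative_along_line[OF grad, where x = x and v = "y - x" and t = 0]
    by (simp add: \<psi>_def[abs_def])
  ultimately have "G x \<bullet> (y - x) * (1 - 0) \<le> \<psi> 1 - \<psi> 0"
    by (intro convex_on_imp_above_tangent) auto
  then show ?thesis
    by (simp add: \<psi>_def)
qed

definition bregman :: "('a::real_inner \<Rightarrow> real) \<Rightarrow> ('a \<Rightarrow> 'a) \<Rightarrow> 'a \<Rightarrow> 'a \<Rightarrow> real" where
  "bregman F G x y = F y - F x - G x \<bullet> (y - x)"

lemma bregman_self [simp]: "bregman F G x x = 0"
  by (simp add: bregman_def)

lemma bregman_three_point:
  "bregman F G x z = bregman F G x y + bregman F G y z + (G y - G x) \<bullet> (z - y)"
  by (simp add: bregman_def algebra_simps)

lemma bregman_nonneg: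
  assumes "convex_on UNIV F" and "\<And>x. GDERIV F x :> G x"
  shows "0 \<le> bregman F G x y"
  using convex_gradient_lower_bound[OF assms, where x = x and y = y] by (simp add: bregman_def)

lemma bregman_le_inner_gradient_diff:
  assumes "convex_on UNIV F" and "\<And>x. GDERIV F x :> G x"
  shows "bregman F G x y \<le> (G y - G x) \<bullet> (y - x)"
proof -
  have "0 = bregman F G x y + bregman F G y x + (G y - G x) \<bullet> (x - y)"
    using bregman_three_point[of F G x x y] by simp
  moreover have "0 \<le> bregman F G y x"
    by (rule bregman_nonneg[OF assms])
  ultimately show ?thesis
    by (simp add: inner_diff_right)
qed

lemma bregman_le_sq_dist:
  assumes "\<And>x. GDERIV F x :> G x" and "\<And>x y. norm (G x - G y) \<le> L * norm (x - y)"
  shows "bregman F G x y \<le> L / 2 * (norm (y - x))\<^sup>2"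
  using lipschitz_gradient_upper_bound[OF assms, where x = x and y = y] by (simp add: bregman_def)

(* Cocoercivity: compare x with the gradient step u = y - (1/L) (G y - G x) taken from y. *)
lemma bregman_ge_sq_gradient_dist:
  assumes convex: "convex_on UNIV F" and grad: "\<And>x. GDERIV F x :> G x"
    and lip: "\<And>x y. norm (G x - G y) \<le> L * norm (x - y)" and L: "L > 0"
  shows "(norm (G y - G x))\<^sup>2 / (2 * L) \<le> bregman F G x y"
proof -
  define w where "w = G y - G x"
  define u where "u = y - (1 / L) *\<^sub>R w"
  have "bregman F G x u = bregman F G x y + bregman F G y u + (G y - G x) \<bullet> (u - y)"
    by (rule bregman_three_point)
  moreover have "(G y - G x) \<bullet> (u - y) = - 2 * ((norm w)\<^sup>2 / (2 * L))"
    by (simp add: u_def w_def power2_norm_eq_inner)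
  moreover have "0 \<le> bregman F G x u"
    by (rule bregman_nonneg[OF convex grad])
  moreover have "bregman F G y u \<le> L / 2 * (norm (u - y))\<^sup>2"
    by (rule bregman_le_sq_dist[OF grad lip])
  moreover have "L / 2 * (norm (u - y))\<^sup>2 = (norm w)\<^sup>2 / (2 * L)"
    using L by (simp add: u_def power2_eq_square)
  ultimately show ?thesis
    unfolding w_def by linarith
qed

lemma convex_on_avgF:
  assumes "convex C" and "\<And>i. i < n \<Longrightarrow> convex_on C (f i)"
  shows "convex_on C (avgF n f)"
proof -
  have "convex_on C (\<lambda>x. \<Sum>i<m. f i x)" if "m \<le> n" for m
    using that
  proof (induction m)
    case 0
    then show ?case by (simp add: convex_on_const assms(1))
  next
    case (Suc m)
    then show ?case using assms(2)[of m] by (auto intro!: convex_on_add)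
  qed
  then show ?thesis
    unfolding avgF_def[abs_def] by (intro convex_on_cmul) auto
qed

lemma gderiv_avgF:
  assumes "\<And>i x. i < n \<Longrightarrow> GDERIV (f i) x :> g i x"
  shows "GDERIV (avgF n f) x :> avgG n g x"
proof -
  have "((\<lambda>x. \<Sum>i<n. f i x) has_derivative (\<lambda>h. \<Sum>i<n. h \<bullet> g i x)) (at x)"
    using assms by (intro has_derivative_sum) (auto simp: gderiv_def)
  then have "((\<lambda>x. (1 / real n) * (\<Sum>i<n. f i x))
      has_derivative (\<lambda>h. (1 / real n) * (\<Sum>i<n. h \<bullet> g i x))) (at x)"
    by (rule has_derivative_mult_right)
  then show ?thesis
    by (simp add: gderiv_def avgF_def[abs_def] avgG_def inner_sum_right)
qed

lemma avgG_lipschitz: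
  assumes "n \<ge> 1" and "\<And>i x y. i < n \<Longrightarrow> norm (g i x - g i y) \<le> L * norm (x - y)"
  shows "norm (avgG n g x - avgG n g y) \<le> L * norm (x - y)"
proof -
  have "norm (avgG n g x - avgG n g y) = norm (\<Sum>i<n. g i x - g i y) / real n"
    by (simp add: avgG_def sum_subtractf flip: scaleR_diff_right)
  also have "\<dots> \<le> (\<Sum>i<n. L * norm (x - y)) / real n"
    using assms(2) by (intro divide_right_mono order.trans[OF norm_sum sum_mono]) auto
  also have "\<dots> = L * norm (x - y)"
    using assms(1) by simp
  finally show ?thesis .
qed

lemma bregman_avgF:
  "bregman (avgF n f) (avgG n g) x y = (\<Sum>i<n. bregman (f i) (g i) x y) / real n"
  by (simp add: bregman_def avgF_def avgG_def sum_subtractf inner_sum_left diff_divide_distrib)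

lemma regularized_minimizer_exists:
  fixes F :: "'a::{real_normed_vector, heine_borel} \<Rightarrow> real"
  assumes cont: "continuous_on UNIV F" and bdd: "\<And>x. m \<le> F x" and \<delta>: "\<delta> > 0"
  obtains xs where "\<And>x. F xs + \<delta> / 2 * (norm (xs - x0))\<^sup>2 \<le> F x + \<delta> / 2 * (norm (x - x0))\<^sup>2"
proof -
  define H where "H x = F x + \<delta> / 2 * (norm (x - x0))\<^sup>2" for x
  \<comment> \<open>outside this ball the regularized objective exceeds its value at x0\<close>
  define r where "r = sqrt (2 * (F x0 - m) / \<delta>)"
  have r: "r \<ge> 0" "r\<^sup>2 = 2 * (F x0 - m) / \<delta>"
    using bdd[of x0] \<delta> by (simp_all add: r_def)
  have "continuous_on (cball x0 r) H"
    unfolding H_def by (intro continuous_intros continuous_on_subset[OF cont]) auto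
  then obtain xs where xs: "xs \<in> cball x0 r" "\<And>y. y \<in> cball x0 r \<Longrightarrow> H xs \<le> H y"
    using continuous_attains_inf[OF compact_cball] r(1) by (metis centre_in_cball empty_iff)
  have "H xs \<le> H y" for y
  proof (cases "y \<in> cball x0 r")
    case False
    then have "r\<^sup>2 < (norm (y - x0))\<^sup>2"
      using r(1) by (intro power_strict_mono) (auto simp: dist_norm norm_minus_commute)
    then have "F x0 - m < \<delta> / 2 * (norm (y - x0))\<^sup>2"
      using \<delta> by (simp add: r(2) field_simps)
    then have "H x0 < H y"
      using bdd[of y] by (simp add: H_def)
    then show ?thesis
      using xs(2)[of x0] r(1) by simp
  qed (use xs in auto)
  then show thesis
    using that[of xs] unfolding H_def by blast
qed

lemma gradient_at_regularized_minimizer: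
  fixes F :: "'a::real_inner \<Rightarrow> real"
  assumes grad: "GDERIV F xs :> G"
    and min: "\<And>x. F xs + \<delta> / 2 * (norm (xs - x0))\<^sup>2 \<le> F x + \<delta> / 2 * (norm (x - x0))\<^sup>2"
  shows "G = \<delta> *\<^sub>R (x0 - xs)"
proof -
  define v where "v = G + \<delta> *\<^sub>R (xs - x0)"
  have "((\<lambda>x. F x + \<delta> / 2 * ((x - x0) \<bullet> (x - x0))) has_derivative (\<lambda>h. h \<bullet> v)) (at xs)"
    using grad unfolding gderiv_def v_def
    by (auto intro!: derivative_eq_intros simp: inner_add_right inner_commute algebra_simps)
  then have "(\<lambda>h. h \<bullet> v) = (\<lambda>h. 0)"
    by (rule has_derivative_local_min) (use min in \<open>simp add: power2_norm_eq_inner\<close>)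
  then have "v \<bullet> v = 0"
    by meson
  then have "G = - (\<delta> *\<^sub>R (xs - x0))"
    by (simp add: v_def eq_neg_iff_add_eq_0)
  then show ?thesis
    by (simp flip: scaleR_minus_right)
qed

lemma z_next_eq:
  fixes G z y :: "'a::real_inner"
  assumes "\<alpha> + \<delta> > 0"
  shows "z_next \<alpha> \<delta> G z y = (1 / (\<alpha> + \<delta>)) *\<^sub>R (\<alpha> *\<^sub>R z + \<delta> *\<^sub>R y - G)"
proof -
  define m where "m = (1 / (\<alpha> + \<delta>)) *\<^sub>R (\<alpha> *\<^sub>R z + \<delta> *\<^sub>R y - G)"
  define Q where "Q = (\<lambda>x. G \<bullet> x + \<alpha> / 2 * (norm (x - z))\<^sup>2 + \<delta> / 2 * (norm (x - y))\<^sup>2)"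
  have "(\<alpha> + \<delta>) *\<^sub>R m = \<alpha> *\<^sub>R z + \<delta> *\<^sub>R y - G"
    using assms by (simp add: m_def)
  then have stationary: "G + \<alpha> *\<^sub>R (m - z) + \<delta> *\<^sub>R (m - y) = 0"
    by (simp add: algebra_simps)
  have Q_diff: "Q x - Q m - (\<alpha> + \<delta>) / 2 * (norm (x - m))\<^sup>2
      = (G + \<alpha> *\<^sub>R (m - z) + \<delta> *\<^sub>R (m - y)) \<bullet> (x - m)" for x
    by (simp add: Q_def power2_norm_eq_inner inner_diff_left inner_diff_right inner_add_left
        inner_commute algebra_simps add_divide_distrib)
  have Q_eq: "Q x = Q m + (\<alpha> + \<delta>) / 2 * (norm (x - m))\<^sup>2" for x
    using Q_diff[of x] unfolding stationary by simp
  have "Q m \<le> Q x" for x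
    using Q_eq[of x] assms by simp
  then have "Q (arg_min Q (\<lambda>_. True)) = Q m"
    by (intro arg_min_equality) auto
  then have "(norm (arg_min Q (\<lambda>_. True) - m))\<^sup>2 = 0"
    using Q_eq[of "arg_min Q (\<lambda>_. True)"] assms by simp
  then show ?thesis
    by (simp add: z_next_def Q_def m_def)
qed

lemma sum_norm_diff_sq:
  fixes v :: "'a::real_inner"
  shows "(\<Sum>i\<in>I. (norm (v - a i))\<^sup>2)
    = real (card I) * (norm v)\<^sup>2 - 2 * (v \<bullet> (\<Sum>i\<in>I. a i)) + (\<Sum>i\<in>I. (norm (a i))\<^sup>2)"
  by (cases "finite I")
    (simp_all add: power2_norm_eq_inner inner_diff_left inner_diff_right inner_sum_right
      inner_commute sum_subtractf sum.distrib sum_distrib_left)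

lemma expectation_bind_pmf_le:
  fixes h :: "'b \<Rightarrow> real"
  assumes "finite (set_pmf M)" and "\<And>s. s \<in> set_pmf M \<Longrightarrow> finite (set_pmf (K s))"
    and "\<And>s. s \<in> set_pmf M \<Longrightarrow> measure_pmf.expectation (K s) h \<le> r * h s"
  shows "measure_pmf.expectation (M \<bind> K) h \<le> r * measure_pmf.expectation M h"
proof -
  have "measure_pmf.expectation (M \<bind> K) h
      = (\<Sum>s\<in>set_pmf M. pmf M s * measure_pmf.expectation (K s) h)"
    using assms(1,2) by (simp add: pmf_expectation_bind)
  also have "\<dots> \<le> (\<Sum>s\<in>set_pmf M. pmf M s * (r * h s))"
    using assms(3) by (intro sum_mono mult_left_mono) auto
  also have "\<dots> = r * measure_pmf.expectation M h"
    using assms(1) by (simp add: integral_measure_pmf[of "set_pmf M"] sum_distrib_left algebra_simps)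
  finally show ?thesis .
qed

lemma expectation_le_sqrt_expectation_sq:
  fixes W :: "'b \<Rightarrow> real"
  assumes "finite (set_pmf M)"
  shows "measure_pmf.expectation M W \<le> sqrt (measure_pmf.expectation M (\<lambda>s. (W s)\<^sup>2))"
proof -
  have "integrable M h" for h :: "'b \<Rightarrow> real"
    using assms by (rule integrable_measure_pmf_finite)
  then have "(measure_pmf.expectation M W)\<^sup>2 \<le> measure_pmf.expectation M (\<lambda>s. (W s)\<^sup>2)"
    using convex_power2 by (intro measure_pmf.jensens_inequality[where I = UNIV]) auto
  then show ?thesis
    by (rule real_le_rsqrt)
qed

lemma expectation_svrg_step:
  fixes g :: "nat \<Rightarrow> 'a::real_inner \<Rightarrow> 'a" and L \<delta> \<alpha> :: real and x0 z xt :: 'a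
    and h :: "'a \<times> 'a \<Rightarrow> real"
  assumes "n \<ge> 1"
  defines "y \<equiv> y_pt n g L \<delta> \<alpha> x0 z xt"
  defines "zn \<equiv> \<lambda>i. z_next \<alpha> \<delta> (G_vr n g \<delta> x0 i y xt) z y"
  shows "measure_pmf.expectation (svrg_step n g L \<delta> \<alpha> x0 (z, xt)) h
    = (\<Sum>i<n. h (zn i, y) / real n + (1 - 1 / real n) * h (zn i, xt)) / real n"
proof -
  have "svrg_step n g L \<delta> \<alpha> x0 (z, xt)
      = pmf_of_set {..<n} \<bind> (\<lambda>i. map_pmf (\<lambda>b. (zn i, if b then y else xt)) (bernoulli_pmf (1 / real n)))"
    unfolding y_def zn_def by (simp add: svrg_step_def Let_def map_pmf_def)
  moreover have "finite (set_pmf (map_pmf k (bernoulli_pmf q)))" for k :: "bool \<Rightarrow> 'a \<times> 'a" and q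
    by (simp add: finite_subset[OF subset_UNIV])
  ultimately show ?thesis
    using assms(1) by (simp add: pmf_expectation_bind_pmf_of_set lessThan_empty_iff
        integral_bernoulli_pmf sum_divide_distrib inverse_eq_divide mult.commute)
qed

lemma finite_set_pmf_svrg_step:
  "n \<ge> 1 \<Longrightarrow> finite (set_pmf (svrg_step n g L \<delta> \<alpha> x0 s))"
  by (cases s) (simp add: svrg_step_def Let_def lessThan_empty_iff)

lemma finite_set_pmf_svrg_state:
  "n \<ge> 1 \<Longrightarrow> finite (set_pmf (svrg_state n g L \<delta> \<alpha> x0 k))"
  by (induction k) (simp_all add: finite_set_pmf_svrg_step)

(* In the application, Dx and Dy are the Bregman
   divergences at xt and y; Q, R and Eu are the inner products of grad f(y) - grad f(xs) with
   y - xs, xt - xs and z - xs; Xy and X2 are its inner product with, and the squared norm of,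
   grad f(xt) - grad f(xs); and A2 is the mean squared component gradient difference. *)
lemma lyapunov_contraction_arith:
  fixes p \<alpha> \<delta> L Dx Dy Q R A2 Eu Xy X2 :: real
  assumes "0 \<le> p" "0 \<le> L" "0 < \<alpha> + \<delta>"
    and Q: "(\<alpha> + L + \<delta>) * Q = \<alpha> * Eu + L * R - Xy"
    and Dy: "Dy \<le> Q" and A2: "A2 \<le> 2 * L * (Dx - Dy + Q - R)" and X2: "0 \<le> X2"
  shows "p * Dy + (1 - p) * Dx + p / (2 * (\<alpha> + L + \<delta>)) * (A2 - 2 * (\<alpha> * Eu) + 2 * Xy - X2)
    \<le> (1 - p * (\<alpha> + \<delta>) / (\<alpha> + L + \<delta>)) * Dx"
proof -
  define S where "S = \<alpha> + L + \<delta>"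
  have S: "S > 0" and alpha_delta: "\<alpha> + \<delta> = S - L"
    using assms(2,3) by (auto simp: S_def)
  have Eu: "\<alpha> * Eu = S * Q - L * R + Xy"
    using Q by (simp add: S_def)
  have "p * Dy + (1 - p) * Dx + p / (2 * S) * (A2 - 2 * (\<alpha> * Eu) + 2 * Xy - X2)
      - (1 - p * (\<alpha> + \<delta>) / S) * Dx
      = p * (\<alpha> + \<delta>) / S * (Dy - Q) + p / (2 * S) * (A2 - 2 * L * (Dx - Dy + Q - R))
        - p / (2 * S) * X2"
    unfolding Eu alpha_delta using S by (simp add: field_simps)
  also have "\<dots> \<le> 0"
  proof -
    have "p * (\<alpha> + \<delta>) / S * (Dy - Q) \<le> 0"
      using assms S by (intro mult_nonneg_nonpos) auto
    moreover have "p / (2 * S) * (A2 - 2 * L * (Dx - Dy + Q - R)) \<le> 0"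
      using assms S by (intro mult_nonneg_nonpos) auto
    moreover have "0 \<le> p / (2 * S) * X2"
      using assms S by simp
    ultimately show ?thesis
      by linarith
  qed
  finally show ?thesis
    unfolding S_def by simp
qed

locale svrg_inner_loop =
  fixes n :: nat and f :: "nat \<Rightarrow> 'a::euclidean_space \<Rightarrow> real" and g :: "nat \<Rightarrow> 'a \<Rightarrow> 'a"
    and L \<delta> \<alpha> :: real and x0 :: 'a
  assumes n_pos: "n \<ge> 1"
    and L_pos: "L > 0"
    and convex: "\<And>i. i < n \<Longrightarrow> convex_on UNIV (f i)"
    and grad: "\<And>i x. i < n \<Longrightarrow> GDERIV (f i) x :> g i x"
    and smooth: "\<And>i x y. i < n \<Longrightarrow> norm (g i x - g i y) \<le> L * norm (x - y)"
    and minimizer_exists: "\<exists>xs. \<forall>x. avgF n f xs \<le> avgF n f x"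
    and delta_pos: "\<delta> > 0"
    and alpha_pos: "\<alpha> > 0"
    and alpha_root: "(1 - (1 / real n) * (\<alpha> + \<delta>) / (\<alpha> + L + \<delta>)) * (1 + \<delta> / \<alpha>)\<^sup>2 = 1"
begin

abbreviation F :: "'a \<Rightarrow> real" where "F \<equiv> avgF n f"
abbreviation gradF :: "'a \<Rightarrow> 'a" where "gradF \<equiv> avgG n g"
abbreviation p :: real where "p \<equiv> 1 / real n"

lemma F_convex: "convex_on UNIV F"
  using convex by (intro convex_on_avgF) auto

lemma F_gderiv: "GDERIV F x :> gradF x"
  using grad by (rule gderiv_avgF)

lemma gradF_lipschitz: "norm (gradF x - gradF y) \<le> L * norm (x - y)"
  using n_pos smooth by (rule avgG_lipschitz)

lemma gradRegF_eq: "gradRegF n g \<delta> x0 x = gradF x + \<delta> *\<^sub>R (x - x0)"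
  using n_pos by (simp add: gradRegF_def avgG_def gradReg_def sum.distrib scaleR_add_right sum_constant_scaleR)

definition S :: real where
  "S = \<alpha> + L + \<delta>"

lemma S_pos: "S > 0"
  using L_pos alpha_pos delta_pos by (simp add: S_def)

lemma tau_coefficients:
  "S * tau_x L \<delta> \<alpha> = \<alpha> + \<delta>" "S * (1 - tau_x L \<delta> \<alpha>) = L" "S * tau_z L \<delta> \<alpha> = 1"
proof -
  show tx: "S * tau_x L \<delta> \<alpha> = \<alpha> + \<delta>"
    using S_pos by (simp add: tau_x_def flip: S_def)
  then show tx': "S * (1 - tau_x L \<delta> \<alpha>) = L"
    by (simp add: right_diff_distrib S_def)
  have "S * tau_z L \<delta> \<alpha> = S * tau_x L \<delta> \<alpha> / \<delta> - \<alpha> * (S * (1 - tau_x L \<delta> \<alpha>)) / (\<delta> * L)"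
    by (simp add: tau_z_def right_diff_distrib)
  then show "S * tau_z L \<delta> \<alpha> = 1"
    unfolding tx tx' using L_pos delta_pos by (simp add: field_simps)
qed

definition rate :: real where
  "rate = \<alpha> / (\<alpha> + \<delta>)"

(* The paper's weight alpha^2 p / (2 (L + (1 - p) (alpha + delta))), rewritten with the defining
   equation of alpha; see two_L_lyap_coeff. *)
definition lyap_coeff :: real where
  "lyap_coeff = p * (\<alpha> + \<delta>)\<^sup>2 / (2 * S)"

definition lyapunov :: "'a \<Rightarrow> 'a \<times> 'a \<Rightarrow> real" where
  "lyapunov xs s = bregman F gradF xs (snd s) + lyap_coeff * (norm (fst s - xs))\<^sup>2"

lemma rate_eq: "rate = 1 / (1 + \<delta> / \<alpha>)"
  using alpha_pos delta_pos by (simp add: rate_def field_simps)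

lemma rate_nonneg: "0 \<le> rate"
  using alpha_pos delta_pos by (simp add: rate_def)

lemma rate_sq: "rate\<^sup>2 = 1 - p * (\<alpha> + \<delta>) / S"
  using alpha_root alpha_pos delta_pos unfolding S_def by (simp add: rate_eq power_divide field_simps)

lemma lyap_coeff_nonneg: "lyap_coeff \<ge> 0"
  using S_pos by (simp add: lyap_coeff_def)

lemma two_L_lyap_coeff: "2 * L * lyap_coeff = L * \<alpha>\<^sup>2 * p / (L + (1 - p) * (\<alpha> + \<delta>))"
proof -
  have "S * rate\<^sup>2 = S - p * (\<alpha> + \<delta>)"
    using S_pos by (simp add: rate_sq right_diff_distrib)
  then have "L + (1 - p) * (\<alpha> + \<delta>) = S * rate\<^sup>2"
    by (simp add: S_def algebra_simps)
  also have "\<dots> = S * \<alpha>\<^sup>2 / (\<alpha> + \<delta>)\<^sup>2"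
    by (simp add: rate_def power_divide)
  finally have denominator: "L + (1 - p) * (\<alpha> + \<delta>) = S * \<alpha>\<^sup>2 / (\<alpha> + \<delta>)\<^sup>2" .
  have scaling: "2 * L * (q * t\<^sup>2 / (2 * s)) = L * \<alpha>\<^sup>2 * q / (s * \<alpha>\<^sup>2 / t\<^sup>2)" if "s > 0" "t > 0"
    for q s t :: real
    using that alpha_pos by (simp add: field_simps)
  show ?thesis
    unfolding denominator lyap_coeff_def by (rule scaling) (use S_pos alpha_pos delta_pos in auto)
qed

lemma prox_point_exists:
  obtains xs where "gradF xs = \<delta> *\<^sub>R (x0 - xs)"
    and "\<And>x. F xs + \<delta> / 2 * (norm (xs - x0))\<^sup>2 \<le> F x + \<delta> / 2 * (norm (x - x0))\<^sup>2"
proof -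
  obtain xm where "\<And>x. F xm \<le> F x"
    using minimizer_exists by blast
  moreover have "continuous_on UNIV F"
    using F_gderiv unfolding gderiv_def
    by (meson has_derivative_continuous continuous_at_imp_continuous_on)
  ultimately obtain xs
    where "\<And>x. F xs + \<delta> / 2 * (norm (xs - x0))\<^sup>2 \<le> F x + \<delta> / 2 * (norm (x - x0))\<^sup>2"
    using regularized_minimizer_exists delta_pos by blast
  with that gradient_at_regularized_minimizer[OF F_gderiv] show thesis
    by blast
qed

lemma mean_sq_component_gradient_diff_le:
  "(\<Sum>i<n. (norm (g i y - g i x))\<^sup>2) / real n \<le> 2 * L * bregman F gradF x y"
proof -
  have "(\<Sum>i<n. (norm (g i y - g i x))\<^sup>2 / (2 * L)) \<le> (\<Sum>i<n. bregman (f i) (g i) x y)"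
    using convex grad smooth L_pos by (intro sum_mono bregman_ge_sq_gradient_dist) auto
  then show ?thesis
    using L_pos n_pos by (simp add: bregman_avgF field_simps flip: sum_divide_distrib)
qed

context
  fixes xs :: 'a
  assumes stationary: "gradF xs = \<delta> *\<^sub>R (x0 - xs)"
begin

lemma y_pt_minus_stationary:
  "y_pt n g L \<delta> \<alpha> x0 z xt - xs
    = (1 / S) *\<^sub>R (\<alpha> *\<^sub>R (z - xs) + L *\<^sub>R (xt - xs) - (gradF xt - gradF xs))"
proof -
  have "S *\<^sub>R y_pt n g L \<delta> \<alpha> x0 z xt
      = (S * tau_x L \<delta> \<alpha>) *\<^sub>R z + (S * (1 - tau_x L \<delta> \<alpha>)) *\<^sub>R xt
        + (S * tau_z L \<delta> \<alpha>) *\<^sub>R (\<delta> *\<^sub>R (xt - z) - gradRegF n g \<delta> x0 xt)"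
    unfolding y_pt_def by (simp only: scaleR_add_right scaleR_scaleR)
  also have "\<dots> = (\<alpha> + \<delta>) *\<^sub>R z + L *\<^sub>R xt + (\<delta> *\<^sub>R (xt - z) - (gradF xt + \<delta> *\<^sub>R (xt - x0)))"
    by (simp only: tau_coefficients gradRegF_eq scaleR_one)
  finally have scaled: "S *\<^sub>R (y_pt n g L \<delta> \<alpha> x0 z xt - xs)
      = \<alpha> *\<^sub>R (z - xs) + L *\<^sub>R (xt - xs) - (gradF xt - gradF xs)"
    using stationary by (simp add: S_def algebra_simps)
  have "y_pt n g L \<delta> \<alpha> x0 z xt - xs = (1 / S) *\<^sub>R (S *\<^sub>R (y_pt n g L \<delta> \<alpha> x0 z xt - xs))"
    using S_pos by simp
  then show ?thesis
    by (simp only: scaled)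
qed

lemma z_next_minus_stationary:
  "z_next \<alpha> \<delta> (G_vr n g \<delta> x0 i y xt) z y - xs
    = (1 / (\<alpha> + \<delta>)) *\<^sub>R (\<alpha> *\<^sub>R (z - xs) - (g i y - g i xt) - (gradF xt - gradF xs))"
proof -
  have ad: "\<alpha> + \<delta> > 0"
    using alpha_pos delta_pos by simp
  have "z_next \<alpha> \<delta> (G_vr n g \<delta> x0 i y xt) z y - xs
      = (1 / (\<alpha> + \<delta>)) *\<^sub>R (\<alpha> *\<^sub>R z + \<delta> *\<^sub>R y - G_vr n g \<delta> x0 i y xt - (\<alpha> + \<delta>) *\<^sub>R xs)"
    using ad by (simp add: z_next_eq scaleR_diff_right)
  also have "\<alpha> *\<^sub>R z + \<delta> *\<^sub>R y - G_vr n g \<delta> x0 i y xt - (\<alpha> + \<delta>) *\<^sub>R xs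
      = \<alpha> *\<^sub>R (z - xs) - (g i y - g i xt) - (gradF xt - gradF xs)"
    using stationary by (simp add: G_vr_def gradRegF_eq gradReg_def algebra_simps)
  finally show ?thesis .
qed

lemma mean_sq_dist_z_next:
  fixes y xt z :: 'a
  defines "ux \<equiv> gradF xt - gradF xs" and "uy \<equiv> gradF y - gradF xs"
  shows "(\<Sum>i<n. (norm (z_next \<alpha> \<delta> (G_vr n g \<delta> x0 i y xt) z y - xs))\<^sup>2) / real n
    = (\<alpha>\<^sup>2 * (norm (z - xs))\<^sup>2 - 2 * (\<alpha> * ((z - xs) \<bullet> uy))
        + (\<Sum>i<n. (norm (g i y - g i xt))\<^sup>2) / real n + 2 * (ux \<bullet> uy) - (norm ux)\<^sup>2) / (\<alpha> + \<delta>)\<^sup>2"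
proof -
  define v where "v = \<alpha> *\<^sub>R (z - xs) - ux"
  define a where "a i = g i y - g i xt" for i
  have n: "real n > 0"
    using n_pos by simp
  have "z_next \<alpha> \<delta> (G_vr n g \<delta> x0 i y xt) z y - xs = (1 / (\<alpha> + \<delta>)) *\<^sub>R (v - a i)" for i
    by (simp add: z_next_minus_stationary v_def a_def ux_def algebra_simps)
  then have dist: "(norm (z_next \<alpha> \<delta> (G_vr n g \<delta> x0 i y xt) z y - xs))\<^sup>2
      = (norm (v - a i))\<^sup>2 / (\<alpha> + \<delta>)\<^sup>2" for i
    using alpha_pos delta_pos by (simp add: power_mult_distrib power_divide)
  have sum_a: "(\<Sum>i<n. a i) = real n *\<^sub>R (uy - ux)"
    using n by (simp add: a_def ux_def uy_def avgG_def sum_subtractf scaleR_diff_right)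
  have "(\<Sum>i<n. (norm (z_next \<alpha> \<delta> (G_vr n g \<delta> x0 i y xt) z y - xs))\<^sup>2) / real n
      = ((\<Sum>i<n. (norm (v - a i))\<^sup>2) / real n) / (\<alpha> + \<delta>)\<^sup>2"
    by (simp add: dist divide_divide_eq_left mult.commute flip: sum_divide_distrib)
  also have "(\<Sum>i<n. (norm (v - a i))\<^sup>2) / real n
      = (norm v)\<^sup>2 - 2 * (v \<bullet> (uy - ux)) + (\<Sum>i<n. (norm (a i))\<^sup>2) / real n"
    using n by (simp add: sum_norm_diff_sq sum_a field_simps inner_diff_right)
  also have "(norm v)\<^sup>2 - 2 * (v \<bullet> (uy - ux))
      = \<alpha>\<^sup>2 * (norm (z - xs))\<^sup>2 - 2 * (\<alpha> * ((z - xs) \<bullet> uy)) + 2 * (ux \<bullet> uy) - (norm ux)\<^sup>2"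
    unfolding v_def power2_norm_eq_inner
    by (simp add: inner_diff_left inner_diff_right inner_commute power2_eq_square algebra_simps)
  finally show ?thesis
    by (simp add: a_def)
qed

lemma expectation_lyapunov_step_eq:
  fixes z xt :: 'a
  defines "y \<equiv> y_pt n g L \<delta> \<alpha> x0 z xt"
  defines "ux \<equiv> gradF xt - gradF xs" and "uy \<equiv> gradF y - gradF xs"
  shows "measure_pmf.expectation (svrg_step n g L \<delta> \<alpha> x0 (z, xt)) (lyapunov xs)
    = p * bregman F gradF xs y + (1 - p) * bregman F gradF xs xt
      + p / (2 * S) * ((\<Sum>i<n. (norm (g i y - g i xt))\<^sup>2) / real n
          - 2 * (\<alpha> * ((z - xs) \<bullet> uy)) + 2 * (ux \<bullet> uy) - (norm ux)\<^sup>2)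
      + p * \<alpha>\<^sup>2 / (2 * S) * (norm (z - xs))\<^sup>2"
proof -
  define zn where "zn i = z_next \<alpha> \<delta> (G_vr n g \<delta> x0 i y xt) z y" for i
  define D where "D = p * bregman F gradF xs y + (1 - p) * bregman F gradF xs xt"
  have n: "real n > 0"
    using n_pos by simp
  have "\<alpha> + \<delta> > 0"
    using alpha_pos delta_pos by simp
  have "measure_pmf.expectation (svrg_step n g L \<delta> \<alpha> x0 (z, xt)) (lyapunov xs)
      = (\<Sum>i<n. lyapunov xs (zn i, y) / real n + (1 - p) * lyapunov xs (zn i, xt)) / real n"
    unfolding zn_def y_def by (rule expectation_svrg_step[OF n_pos])
  also have "\<dots> = (\<Sum>i<n. D + lyap_coeff * (norm (zn i - xs))\<^sup>2) / real n"
    by (simp add: lyapunov_def D_def algebra_simps add_divide_distrib)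
  also have "\<dots> = D + lyap_coeff * ((\<Sum>i<n. (norm (zn i - xs))\<^sup>2) / real n)"
    using n by (simp add: sum.distrib add_divide_distrib flip: sum_distrib_left)
  also have "\<dots> = D + p / (2 * S) * ((\<Sum>i<n. (norm (g i y - g i xt))\<^sup>2) / real n
          - 2 * (\<alpha> * ((z - xs) \<bullet> uy)) + 2 * (ux \<bullet> uy) - (norm ux)\<^sup>2)
      + p * \<alpha>\<^sup>2 / (2 * S) * (norm (z - xs))\<^sup>2"
    using n S_pos \<open>\<alpha> + \<delta> > 0\<close>
    by (simp add: zn_def mean_sq_dist_z_next ux_def uy_def lyap_coeff_def field_simps)
  finally show ?thesis
    by (simp add: D_def)
qed

lemma expectation_lyapunov_step:
  "measure_pmf.expectation (svrg_step n g L \<delta> \<alpha> x0 s) (lyapunov xs) \<le> rate\<^sup>2 * lyapunov xs s"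
proof -
  obtain z xt where s: "s = (z, xt)"
    by fastforce
  define y where "y = y_pt n g L \<delta> \<alpha> x0 z xt"
  define ux where "ux = gradF xt - gradF xs"
  define uy where "uy = gradF y - gradF xs"
  define Dx where "Dx = bregman F gradF xs xt"
  define Dy where "Dy = bregman F gradF xs y"
  define A2 where "A2 = (\<Sum>i<n. (norm (g i y - g i xt))\<^sup>2) / real n"
  have "measure_pmf.expectation (svrg_step n g L \<delta> \<alpha> x0 s) (lyapunov xs)
      = p * Dy + (1 - p) * Dx
        + p / (2 * S) * (A2 - 2 * (\<alpha> * ((z - xs) \<bullet> uy)) + 2 * (ux \<bullet> uy) - (norm ux)\<^sup>2)
        + p * \<alpha>\<^sup>2 / (2 * S) * (norm (z - xs))\<^sup>2"
    unfolding s Dx_def Dy_def A2_def ux_def uy_def y_def by (rule expectation_lyapunov_step_eq)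
  also have "\<dots> \<le> rate\<^sup>2 * Dx + p * \<alpha>\<^sup>2 / (2 * S) * (norm (z - xs))\<^sup>2"
    \<comment> \<open>the terms in ||z - xs||^2 agree since rate^2 * lyap_coeff = p alpha^2 / (2 S)\<close>
  proof -
    have "S * ((y - xs) \<bullet> uy) = \<alpha> * ((z - xs) \<bullet> uy) + L * ((xt - xs) \<bullet> uy) - ux \<bullet> uy"
      using S_pos by (simp add: y_def y_pt_minus_stationary ux_def inner_diff_left inner_add_left)
    moreover have "Dy \<le> (y - xs) \<bullet> uy"
      using bregman_le_inner_gradient_diff[OF F_convex F_gderiv] by (simp add: Dy_def uy_def inner_commute)
    moreover have "A2 \<le> 2 * L * (Dx - Dy + (y - xs) \<bullet> uy - (xt - xs) \<bullet> uy)"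
    proof -
      have "bregman F gradF y xt = Dx - Dy + (y - xs) \<bullet> uy - (xt - xs) \<bullet> uy"
        using bregman_three_point[of F gradF xs xt y]
        by (simp add: Dx_def Dy_def uy_def inner_diff_left inner_diff_right inner_commute algebra_simps)
      then show ?thesis
        using mean_sq_component_gradient_diff_le[of xt y] by (simp add: A2_def norm_minus_commute)
    qed
    ultimately show ?thesis
      using lyapunov_contraction_arith[of p L \<alpha> \<delta>] L_pos alpha_pos delta_pos
      by (simp add: rate_sq flip: S_def)
  qed
  also have "\<dots> = rate\<^sup>2 * lyapunov xs s"
    using alpha_pos delta_pos
    by (simp add: s lyapunov_def Dx_def rate_def lyap_coeff_def power_divide field_simps)
  finally show ?thesis .
qed

lemma expectation_lyapunov_state:
  "measure_pmf.expectation (svrg_state n g L \<delta> \<alpha> x0 k) (lyapunov xs)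
    \<le> (rate\<^sup>2) ^ k * lyapunov xs (x0, x0)"
proof (induction k)
  case (Suc k)
  have "measure_pmf.expectation (svrg_state n g L \<delta> \<alpha> x0 (Suc k)) (lyapunov xs)
      \<le> rate\<^sup>2 * measure_pmf.expectation (svrg_state n g L \<delta> \<alpha> x0 k) (lyapunov xs)"
    unfolding svrg_state.simps
    using finite_set_pmf_svrg_state[OF n_pos] finite_set_pmf_svrg_step[OF n_pos]
      expectation_lyapunov_step
    by (intro expectation_bind_pmf_le)
  also have "\<dots> \<le> rate\<^sup>2 * ((rate\<^sup>2) ^ k * lyapunov xs (x0, x0))"
    using Suc by (intro mult_left_mono) auto
  finally show ?case
    by simp
qed simp

lemma expectation_norm_gradF_le:
  "measure_pmf.expectation (svrg_state n g L \<delta> \<alpha> x0 k) (\<lambda>s. norm (gradF (snd s)))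
    \<le> norm (gradF xs) + rate ^ k * sqrt (2 * L * lyapunov xs (x0, x0))"
proof -
  define M where "M = svrg_state n g L \<delta> \<alpha> x0 k"
  define W where "W s = norm (gradF (snd s) - gradF xs)" for s :: "'a \<times> 'a"
  have finite: "finite (set_pmf M)"
    unfolding M_def by (rule finite_set_pmf_svrg_state[OF n_pos])
  then have int: "integrable M h" for h :: "'a \<times> 'a \<Rightarrow> real"
    by (rule integrable_measure_pmf_finite)
  have W_sq: "(W s)\<^sup>2 \<le> 2 * L * lyapunov xs s" for s
  proof -
    have "(W s)\<^sup>2 / (2 * L) \<le> lyapunov xs s"
      using bregman_ge_sq_gradient_dist[OF F_convex F_gderiv gradF_lipschitz L_pos, where x = xs and y = "snd s"]
        lyap_coeff_nonneg
      by (simp add: W_def lyapunov_def add_increasing2)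
    then show ?thesis
      using L_pos by (simp add: field_simps)
  qed
  have "measure_pmf.expectation M (\<lambda>s. (W s)\<^sup>2) \<le> measure_pmf.expectation M (\<lambda>s. 2 * L * lyapunov xs s)"
    using int W_sq by (intro integral_mono) auto
  also have "\<dots> \<le> 2 * L * ((rate\<^sup>2) ^ k * lyapunov xs (x0, x0))"
    using expectation_lyapunov_state L_pos by (simp add: M_def)
  also have "\<dots> = (rate ^ k)\<^sup>2 * (2 * L * lyapunov xs (x0, x0))"
    by (simp add: ac_simps flip: power_mult)
  finally have "measure_pmf.expectation M W \<le> sqrt ((rate ^ k)\<^sup>2 * (2 * L * lyapunov xs (x0, x0)))"
    using expectation_le_sqrt_expectation_sq[OF finite, of W] real_sqrt_le_mono order_trans by blast
  also have "\<dots> = rate ^ k * sqrt (2 * L * lyapunov xs (x0, x0))"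
    using rate_nonneg by (simp add: real_sqrt_mult)
  finally have W_bound: "measure_pmf.expectation M W \<le> rate ^ k * sqrt (2 * L * lyapunov xs (x0, x0))" .
  have "measure_pmf.expectation M (\<lambda>s. norm (gradF (snd s)))
      \<le> measure_pmf.expectation M (\<lambda>s. norm (gradF xs) + W s)"
    using int by (intro integral_mono) (auto simp: W_def norm_triangle_sub)
  also have "\<dots> = norm (gradF xs) + measure_pmf.expectation M W"
    using int by simp
  finally show ?thesis
    using W_bound unfolding M_def by linarith
qed

lemma expectation_norm_gradF_bound:
  assumes "norm (gradF xs) \<le> a * B" and "2 * L * lyapunov xs (x0, x0) \<le> C * B\<^sup>2" and "0 \<le> B"
  shows "measure_pmf.expectation (svrg_state n g L \<delta> \<alpha> x0 k) (\<lambda>s. norm (gradF (snd s)))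
    \<le> (a + sqrt C / (1 + \<delta> / \<alpha>) ^ k) * B"
proof -
  have "sqrt (2 * L * lyapunov xs (x0, x0)) \<le> sqrt C * B"
    using assms(2,3) real_sqrt_le_mono by (fastforce simp: real_sqrt_mult)
  then have "rate ^ k * sqrt (2 * L * lyapunov xs (x0, x0)) \<le> rate ^ k * (sqrt C * B)"
    using rate_nonneg by (intro mult_left_mono) simp_all
  then have "measure_pmf.expectation (svrg_state n g L \<delta> \<alpha> x0 k) (\<lambda>s. norm (gradF (snd s)))
      \<le> a * B + rate ^ k * (sqrt C * B)"
    using expectation_norm_gradF_le[of k] assms(1) by linarith
  then show ?thesis
    by (simp add: rate_eq power_divide algebra_simps)
qed

end

lemma optimality_gap_nonneg: "0 \<le> F x - (INF x. F x)"
proof -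
  obtain xm where "\<And>x. F xm \<le> F x"
    using minimizer_exists by blast
  then have "bdd_below (range F)"
    by (intro bdd_belowI2)
  then show ?thesis
    by (simp add: cINF_lower)
qed

lemma prox_point_closer:
  assumes prox_min: "\<And>x. F xs + \<delta> / 2 * (norm (xs - x0))\<^sup>2 \<le> F x + \<delta> / 2 * (norm (x - x0))\<^sup>2"
    and xm: "\<And>x. F xm \<le> F x"
  shows "norm (x0 - xs) \<le> norm (x0 - xm)"
proof -
  have "\<delta> / 2 * (norm (xs - x0))\<^sup>2 \<le> \<delta> / 2 * (norm (xm - x0))\<^sup>2"
    using prox_min[of xm] xm[of xs] by simp
  then have "(norm (x0 - xs))\<^sup>2 \<le> (norm (x0 - xm))\<^sup>2"
    using delta_pos by (simp add: norm_minus_commute)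
  then show ?thesis
    by (rule power2_le_imp_le) simp
qed

lemma initial_bounds_from_distance:
  assumes prox_min: "\<And>x. F xs + \<delta> / 2 * (norm (xs - x0))\<^sup>2 \<le> F x + \<delta> / 2 * (norm (x - x0))\<^sup>2"
    and xm: "\<And>x. F xm \<le> F x" and R0: "norm (x0 - xm) \<le> R0"
  shows "norm (gradF xs) \<le> \<delta> * R0"
    and "2 * L * lyapunov xs (x0, x0) \<le> C_IDC p L \<delta> \<alpha> * R0\<^sup>2"
proof -
  have stationary: "gradF xs = \<delta> *\<^sub>R (x0 - xs)"
    by (rule gradient_at_regularized_minimizer[OF F_gderiv prox_min])
  have dist: "norm (x0 - xs) \<le> R0"
    using prox_point_closer[OF prox_min xm] R0 by linarith
  show "norm (gradF xs) \<le> \<delta> * R0"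
    using dist delta_pos by (simp add: stationary)
  have "bregman F gradF xs x0 \<le> L / 2 * (norm (x0 - xs))\<^sup>2"
    by (rule bregman_le_sq_dist[OF F_gderiv gradF_lipschitz])
  then have "2 * L * lyapunov xs (x0, x0) \<le> (L\<^sup>2 + 2 * L * lyap_coeff) * (norm (x0 - xs))\<^sup>2"
    using L_pos by (simp add: lyapunov_def power2_eq_square algebra_simps)
  also have "\<dots> \<le> (L\<^sup>2 + 2 * L * lyap_coeff) * R0\<^sup>2"
    using dist L_pos lyap_coeff_nonneg by (intro mult_left_mono power_mono) auto
  finally show "2 * L * lyapunov xs (x0, x0) \<le> C_IDC p L \<delta> \<alpha> * R0\<^sup>2"
    by (simp add: C_IDC_def two_L_lyap_coeff)
qed

lemma prox_point_value_gap:
  assumes prox_min: "\<And>x. F xs + \<delta> / 2 * (norm (xs - x0))\<^sup>2 \<le> F x + \<delta> / 2 * (norm (x - x0))\<^sup>2"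
    and gap: "F x0 - (INF x. F x) \<le> \<Delta>0"
  shows "F x0 - F xs \<le> \<Delta>0" and "\<delta> * (norm (x0 - xs))\<^sup>2 \<le> 2 * \<Delta>0"
proof -
  obtain xm where xm: "\<And>x. F xm \<le> F x"
    using minimizer_exists by blast
  then have "(INF x. F x) = F xm"
    by (intro cInf_eq_minimum) auto
  then show gap_xs: "F x0 - F xs \<le> \<Delta>0"
    using gap xm[of xs] by simp
  show "\<delta> * (norm (x0 - xs))\<^sup>2 \<le> 2 * \<Delta>0"
    using prox_min[of x0] gap_xs by (simp add: norm_minus_commute)
qed

lemma initial_bounds_from_gap:
  assumes prox_min: "\<And>x. F xs + \<delta> / 2 * (norm (xs - x0))\<^sup>2 \<le> F x + \<delta> / 2 * (norm (x - x0))\<^sup>2"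
    and gap: "F x0 - (INF x. F x) \<le> \<Delta>0"
  shows "norm (gradF xs) \<le> sqrt (2 * \<delta>) * sqrt \<Delta>0"
    and "2 * L * lyapunov xs (x0, x0) \<le> C_IFC p L \<delta> \<alpha> * (sqrt \<Delta>0)\<^sup>2"
proof -
  have stationary: "gradF xs = \<delta> *\<^sub>R (x0 - xs)"
    by (rule gradient_at_regularized_minimizer[OF F_gderiv prox_min])
  note gap_xs = prox_point_value_gap(1)[OF prox_min gap]
    and dist = prox_point_value_gap(2)[OF prox_min gap]
  have "\<Delta>0 \<ge> 0"
    using optimality_gap_nonneg[of x0] gap by linarith
  have "(norm (gradF xs))\<^sup>2 = \<delta> * (\<delta> * (norm (x0 - xs))\<^sup>2)"
    using delta_pos by (simp add: stationary power_mult_distrib power2_eq_square)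
  also have "\<dots> \<le> (sqrt (2 * \<delta>) * sqrt \<Delta>0)\<^sup>2"
    using dist delta_pos \<open>\<Delta>0 \<ge> 0\<close> by (simp add: power_mult_distrib)
  finally show "norm (gradF xs) \<le> sqrt (2 * \<delta>) * sqrt \<Delta>0"
    by (rule power2_le_imp_le) (use delta_pos \<open>\<Delta>0 \<ge> 0\<close> in simp)
  have "bregman F gradF xs x0 = F x0 - F xs - \<delta> * (norm (x0 - xs))\<^sup>2"
    by (simp add: bregman_def stationary power2_norm_eq_inner inner_commute)
  moreover have "0 \<le> \<delta> * (norm (x0 - xs))\<^sup>2"
    using delta_pos by simp
  ultimately have "bregman F gradF xs x0 \<le> \<Delta>0"
    using gap_xs by linarith
  moreover have "lyap_coeff * (norm (x0 - xs))\<^sup>2 \<le> lyap_coeff * (2 * \<Delta>0 / \<delta>)"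
    using dist delta_pos lyap_coeff_nonneg by (intro mult_left_mono) (simp_all add: field_simps)
  ultimately have "2 * L * lyapunov xs (x0, x0) \<le> 2 * L * (\<Delta>0 + lyap_coeff * (2 * \<Delta>0 / \<delta>))"
    using L_pos by (simp add: lyapunov_def norm_minus_commute)
  also have "\<dots> = (2 * L + 2 * (2 * L * lyap_coeff) / \<delta>) * \<Delta>0"
    using delta_pos by (simp add: field_simps)
  also have "\<dots> = C_IFC p L \<delta> \<alpha> * (sqrt \<Delta>0)\<^sup>2"
    unfolding two_L_lyap_coeff C_IFC_def using \<open>\<Delta>0 \<ge> 0\<close>
    by (simp add: divide_divide_eq_left mult.assoc)
  finally show "2 * L * lyapunov xs (x0, x0) \<le> C_IFC p L \<delta> \<alpha> * (sqrt \<Delta>0)\<^sup>2" .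
qed

end

theorem proposition4:
  fixes n :: nat and f :: "nat \<Rightarrow> 'a::euclidean_space \<Rightarrow> real" and g :: "nat \<Rightarrow> 'a \<Rightarrow> 'a"
    and L \<delta> \<alpha> :: real and x0 :: 'a
  assumes n_pos: "n \<ge> 1"
    and L_pos: "L > 0"
    and convex: "\<And>i. i < n \<Longrightarrow> convex_on UNIV (f i)"
    and grad: "\<And>i x. i < n \<Longrightarrow> GDERIV (f i) x :> g i x"
    and smooth: "\<And>i x y. i < n \<Longrightarrow> norm (g i x - g i y) \<le> L * norm (x - y)"
    and minimizer_exists: "\<exists>xs. \<forall>x. avgF n f xs \<le> avgF n f x"
    and delta_pos: "\<delta> > 0"
    and alpha_pos: "\<alpha> > 0"
    and alpha_root: "(1 - (1 / real n) * (\<alpha> + \<delta>) / (\<alpha> + L + \<delta>)) * (1 + \<delta> / \<alpha>)\<^sup>2 = 1"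
  shows "\<forall>k.
     (\<forall>xs R0. (\<forall>x. avgF n f xs \<le> avgF n f x) \<and> norm (x0 - xs) \<le> R0 \<longrightarrow>
        measure_pmf.expectation (svrg_state n g L \<delta> \<alpha> x0 k) (\<lambda>s. norm (avgG n g (snd s)))
          \<le> (\<delta> + sqrt (C_IDC (1 / real n) L \<delta> \<alpha>) / (1 + \<delta> / \<alpha>) ^ k) * R0)
   \<and> (\<forall>\<Delta>0. avgF n f x0 - (INF x. avgF n f x) \<le> \<Delta>0 \<longrightarrow>
        measure_pmf.expectation (svrg_state n g L \<delta> \<alpha> x0 k) (\<lambda>s. norm (avgG n g (snd s)))
          \<le> (sqrt (2 * \<delta>) + sqrt (C_IFC (1 / real n) L \<delta> \<alpha>) / (1 + \<delta> / \<alpha>) ^ k) * sqrt \<Delta>0)"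
proof -
  interpret svrg_inner_loop n f g L \<delta> \<alpha> x0
    using assms by unfold_locales
  obtain xp where stationary: "gradF xp = \<delta> *\<^sub>R (x0 - xp)"
    and prox_min: "\<And>x. F xp + \<delta> / 2 * (norm (xp - x0))\<^sup>2 \<le> F x + \<delta> / 2 * (norm (x - x0))\<^sup>2"
    using prox_point_exists by blast
  show ?thesis
  proof (intro allI conjI impI)
    fix k xm R0
    assume "(\<forall>x. F xm \<le> F x) \<and> norm (x0 - xm) \<le> R0"
    then have xm: "\<And>x. F xm \<le> F x" and R0: "norm (x0 - xm) \<le> R0"
      by auto
    then have "0 \<le> R0"
      by (meson norm_ge_zero order_trans)
    then show "measure_pmf.expectation (svrg_state n g L \<delta> \<alpha> x0 k) (\<lambda>s. norm (gradF (snd s)))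
        \<le> (\<delta> + sqrt (C_IDC p L \<delta> \<alpha>) / (1 + \<delta> / \<alpha>) ^ k) * R0"
      by (rule expectation_norm_gradF_bound[OF stationary initial_bounds_from_distance[OF prox_min xm R0]])
  next
    fix k \<Delta>0
    assume gap: "F x0 - (INF x. F x) \<le> \<Delta>0"
    show "measure_pmf.expectation (svrg_state n g L \<delta> \<alpha> x0 k) (\<lambda>s. norm (gradF (snd s)))
        \<le> (sqrt (2 * \<delta>) + sqrt (C_IFC p L \<delta> \<alpha>) / (1 + \<delta> / \<alpha>) ^ k) * sqrt \<Delta>0"
      using optimality_gap_nonneg[of x0] gap
      by (intro expectation_norm_gradF_bound[OF stationary initial_bounds_from_gap[OF prox_min gap]]) auto
  qed
qed

end
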